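(* Let $M=\mathbb{S}^3\times\mathbb{S}^3=SU(2)\times SU(2)$. Let $\{E^1,E^2,E^3\}$ and $\{F^1,F^2,F^3\}$ be left-invariant coframes on the two factors satisfying $$dE^1=-2E^2\wedge E^3,\quad dE^2=2E^1\wedge E^3,\quad dE^3=-2E^1\wedge E^2,$$ and the analogous equations for $F^1,F^2,F^3$. Let $J$ be the (integrable, Calabi–Eckmann) complex structure on $M$ whose $(1,0)$-forms are spanned by $$\psi^1=E^1+iE^2,\qquad \psi^2=F^1+iF^2,\qquad \psi^3=E^3+iF^3.$$ Then for every Gauduchon metric on $(M,J)$, i.e. every Hermitian metric whose fundamental form $\omega$ satisfies $\partial\overline{\partial}\omega^2=0$, one has $0\ne[\omega^2]_A\in H^{2,2}_A(M)$.
   Context: The structure equations of $J$ are $$d\psi^1=i\psi^{13}+i\psi^{1\bar3},\qquad d\psi^2=\psi^{23}-\psi^{2\bar3},\qquad d\psi^3=-i\psi^{1\bar1}+\psi^{2\bar2},$$ where $\psi^{j\bar k}=\psi^j\wedge\overline{\psi^k}$, and similarly for other multi-indices. The Aeppli cohomology is $$H^{p,q}_{A}(M)=\frac{\ker\partial\overline{\partial}}{\operatorname{im}\partial+\operatorname{im}\overline{\partial}},$$ computed on smooth $(p,q)$-forms. *)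

theory Defs
  imports "HOL-Analysis.Analysis" "HOL-Library.Function_Algebras"
begin

text \<open>Quaternion a + b i + c j + d k is represented as (a,b,c,d).\<close>
type_synonym quat = "real \<times> real \<times> real \<times> real"

fun qmult :: "quat \<Rightarrow> quat \<Rightarrow> quat" where
  "qmult (a1,b1,c1,d1) (a2,b2,c2,d2) =
     (a1*a2 - b1*b2 - c1*c2 - d1*d2,
      a1*b2 + b1*a2 + c1*d2 - d1*c2,
      a1*c2 - b1*d2 + c1*a2 + d1*b2,
      a1*d2 + b1*c2 - c1*b2 + d1*a2)"

fun qnorm2 :: "quat \<Rightarrow> real" where
  "qnorm2 (a,b,c,d) = a^2 + b^2 + c^2 + d^2"

definition SU2 :: "quat set" where
  "SU2 = {q. qnorm2 q = 1}"

type_synonym pt = "quat \<times> quat"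

definition Mspace :: "pt set" where
  "Mspace = SU2 \<times> SU2"

text \<open>exp(t e) for the unit quaternions e = i, j, k (index 0,1,2).\<close>
definition qexp :: "nat \<Rightarrow> real \<Rightarrow> quat" where
  "qexp a t = (if a = 0 then (cos t, sin t, 0, 0)
               else if a = 1 then (cos t, 0, sin t, 0)
               else (cos t, 0, 0, sin t))"

text \<open>Flows of the left-invariant vector fields X1,X2,X3 (indices 0,1,2, first factor,
  X_a(p) = p e_a) and Y1,Y2,Y3 (indices 3,4,5, second factor).  These are the frames
  dual to the coframes E^1,E^2,E^3 resp. F^1,F^2,F^3; one has [X1,X2] = 2 X3 etc., so
  dE^1 = -2 E^23, dE^2 = 2 E^13, dE^3 = -2 E^12, and likewise for F.\<close>
definition flow :: "nat \<Rightarrow> real \<Rightarrow> pt \<Rightarrow> pt" where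
  "flow i t x = (if i < 3 then (qmult (fst x) (qexp i t), snd x)
                 else if i < 6 then (fst x, qmult (snd x) (qexp (i - 3) t))
                 else x)"

definition Xd :: "nat \<Rightarrow> (pt \<Rightarrow> complex) \<Rightarrow> pt \<Rightarrow> complex" where
  "Xd i f x = vector_derivative (\<lambda>t. f (flow i t x)) (at 0)"

fun lder :: "nat list \<Rightarrow> (pt \<Rightarrow> complex) \<Rightarrow> pt \<Rightarrow> complex" where
  "lder [] f = f"
| "lder (i # ws) f = Xd i (lder ws f)"

definition smooth_fun :: "(pt \<Rightarrow> complex) \<Rightarrow> bool" where
  "smooth_fun f \<longleftrightarrow>
     (\<forall>ws. continuous_on Mspace (lder ws f) \<and>
           (\<forall>x\<in>Mspace. \<forall>i<6. (\<lambda>t. lder ws f (flow i t x)) differentiable (at 0)))"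

text \<open>Generator index 0,1,2 = psi^1,psi^2,psi^3; index 3,4,5 = conj psi^1, conj psi^2,
  conj psi^3, where psi^1 = E^1 + i E^2, psi^2 = F^1 + i F^2, psi^3 = E^3 + i F^3.
  A form is given by its coefficient functions on the increasing monomials psi^S,
  S a subset of {0..5}.\<close>
type_synonym form = "nat set \<Rightarrow> pt \<Rightarrow> complex"

definition gen :: "nat set \<Rightarrow> form" where
  "gen S = (\<lambda>U x. if U = S then 1 else 0)"

definition mulf :: "(pt \<Rightarrow> complex) \<Rightarrow> form \<Rightarrow> form" where
  "mulf f \<alpha> = (\<lambda>U x. f x * \<alpha> U x)"

definition wsign :: "nat set \<Rightarrow> nat set \<Rightarrow> complex" where
  "wsign S T = (-1) ^ card {(s, t). s \<in> S \<and> t \<in> T \<and> t < s}"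

definition wedge :: "form \<Rightarrow> form \<Rightarrow> form" where
  "wedge \<alpha> \<beta> = (\<lambda>U x. if U \<subseteq> {..<6}
      then (\<Sum>S\<in>Pow U. wsign S (U - S) * \<alpha> S x * \<beta> (U - S) x) else 0)"

text \<open>The complex frame dual to psi: Z_k with psi^j(Z_k) = delta.\<close>
definition Zd :: "nat \<Rightarrow> (pt \<Rightarrow> complex) \<Rightarrow> pt \<Rightarrow> complex" where
  "Zd k f x =
    (if k = 0 then (Xd 0 f x - \<i> * Xd 1 f x) / 2
     else if k = 1 then (Xd 3 f x - \<i> * Xd 4 f x) / 2
     else if k = 2 then (Xd 2 f x - \<i> * Xd 5 f x) / 2
     else if k = 3 then (Xd 0 f x + \<i> * Xd 1 f x) / 2
     else if k = 4 then (Xd 3 f x + \<i> * Xd 4 f x) / 2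
     else if k = 5 then (Xd 2 f x + \<i> * Xd 5 f x) / 2
     else 0)"

definition dfun :: "(pt \<Rightarrow> complex) \<Rightarrow> form" where
  "dfun f = (\<Sum>k<6. mulf (Zd k f) (gen {k}))"

definition cst :: "complex \<Rightarrow> pt \<Rightarrow> complex" where
  "cst c = (\<lambda>_. c)"

text \<open>Structure equations: d psi^1 = i psi^13 + i psi^1 bar3,
  d psi^2 = psi^23 - psi^2 bar3, d psi^3 = -i psi^1 bar1 + psi^2 bar2,
  and their complex conjugates.\<close>
definition dpsi :: "nat \<Rightarrow> form" where
  "dpsi j =
    (if j = 0 then mulf (cst \<i>) (gen {0,2}) + mulf (cst \<i>) (gen {0,5})
     else if j = 1 then gen {1,2} - gen {1,5}
     else if j = 2 then mulf (cst (-\<i>)) (gen {0,3}) + gen {1,4}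
     else if j = 3 then mulf (cst (-\<i>)) (gen {3,5}) + mulf (cst \<i>) (gen {2,3})
     else if j = 4 then gen {4,5} + gen {2,4}
     else if j = 5 then mulf (cst (-\<i>)) (gen {0,3}) - gen {1,4}
     else 0)"

text \<open>d of the monomial psi^S (Leibniz rule).\<close>
definition dmono :: "nat set \<Rightarrow> form" where
  "dmono S = (\<Sum>j\<in>S. mulf (cst ((-1) ^ card {s\<in>S. s < j})) (wedge (dpsi j) (gen (S - {j}))))"

definition ext_d :: "form \<Rightarrow> form" where
  "ext_d \<alpha> = (\<Sum>S\<in>Pow {..<6}. wedge (dfun (\<alpha> S)) (gen S) + mulf (\<alpha> S) (dmono S))"

definition bideg_ok :: "nat \<Rightarrow> nat \<Rightarrow> nat set \<Rightarrow> bool" where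
  "bideg_ok p q U \<longleftrightarrow> U \<subseteq> {..<6} \<and> card (U \<inter> {0,1,2}) = p \<and> card (U \<inter> {3,4,5}) = q"

definition proj :: "nat \<Rightarrow> nat \<Rightarrow> form \<Rightarrow> form" where
  "proj p q \<alpha> = (\<lambda>U x. if bideg_ok p q U then \<alpha> U x else 0)"

definition del :: "form \<Rightarrow> form" where
  "del \<alpha> = (\<Sum>p\<le>3. \<Sum>q\<le>3. proj (p+1) q (ext_d (proj p q \<alpha>)))"

definition delbar :: "form \<Rightarrow> form" where
  "delbar \<alpha> = (\<Sum>p\<le>3. \<Sum>q\<le>3. proj p (q+1) (ext_d (proj p q \<alpha>)))"

definition smooth_form :: "form \<Rightarrow> bool" where
  "smooth_form \<alpha> \<longleftrightarrow> (\<forall>U. smooth_fun (\<alpha> U))"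

definition is_type :: "nat \<Rightarrow> nat \<Rightarrow> form \<Rightarrow> bool" where
  "is_type p q \<alpha> \<longleftrightarrow> (\<forall>U. \<not> bideg_ok p q U \<longrightarrow> \<alpha> U = (\<lambda>x. 0))"

text \<open>A Hermitian metric g = sum h_jk psi^j (x) conj psi^k, given by a smooth
  positive definite Hermitian matrix function h (indices < 3).\<close>
definition hermitian_metric :: "(nat \<Rightarrow> nat \<Rightarrow> pt \<Rightarrow> complex) \<Rightarrow> bool" where
  "hermitian_metric h \<longleftrightarrow>
     (\<forall>j<3. \<forall>k<3. smooth_fun (h j k)) \<and>
     (\<forall>x\<in>Mspace. \<forall>j<3. \<forall>k<3. h k j x = cnj (h j k x)) \<and>
     (\<forall>x\<in>Mspace. \<forall>v :: nat \<Rightarrow> complex. (\<exists>j<3. v j \<noteq> 0) \<longrightarrow>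
        0 < Re (\<Sum>j<3. \<Sum>k<3. h j k x * v j * cnj (v k)))"

definition fundform :: "(nat \<Rightarrow> nat \<Rightarrow> pt \<Rightarrow> complex) \<Rightarrow> form" where
  "fundform h = (\<Sum>j<3. \<Sum>k<3. mulf (\<lambda>x. \<i> * h j k x) (wedge (gen {j}) (gen {k + 3})))"

definition gauduchon :: "(nat \<Rightarrow> nat \<Rightarrow> pt \<Rightarrow> complex) \<Rightarrow> bool" where
  "gauduchon h \<longleftrightarrow> hermitian_metric h \<and>
     (\<forall>U. \<forall>x\<in>Mspace. del (delbar (wedge (fundform h) (fundform h))) U x = 0)"

definition aeppli_zero :: "nat \<Rightarrow> nat \<Rightarrow> form \<Rightarrow> bool" where
  "aeppli_zero p q \<gamma> \<longleftrightarrow>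
     (\<exists>\<alpha> \<beta>. smooth_form \<alpha> \<and> is_type (p - 1) q \<alpha> \<and>
             smooth_form \<beta> \<and> is_type p (q - 1) \<beta> \<and>
             (\<forall>U. \<forall>x\<in>Mspace. \<gamma> U x = del \<alpha> U x + delbar \<beta> U x))"

end

theory Submission
  imports Defs
begin

text \<open>Only the coefficient of \<open>\<psi>\<^sup>2\<^sup>3\<^sup>2\<^sup>3\<close> (that is, of \<open>\<psi>\<^sup>2 \<and> \<psi>\<^sup>3 \<and> \<psi>\<^sup>2 bar \<and> \<psi>\<^sup>3 bar\<close>)
  matters.  For \<open>\<omega> = i \<Sum> h\<^sub>j\<^sub>k \<psi>\<^sup>j \<and> \<psi>\<^sup>k bar\<close> this coefficient of \<open>\<omega>\<^sup>2\<close> is twice the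
  \<open>{2,3}\<close>-minor of \<open>h\<close>, a positive function.  On the other hand the structure equations never
  produce \<open>\<psi>\<^sup>2\<^sup>3\<^sup>2\<^sup>3\<close>, so the corresponding coefficient of \<open>\<partial>\<alpha> + \<partial>bar \<beta>\<close> is a sum of
  derivatives of smooth functions along the left-invariant frame.  Integrating over \<open>M\<close> with
  respect to a measure invariant under the flows of the frame kills such derivatives, whereas the
  integral of a positive function is positive.\<close>

lemma sum_form_apply: "(sum (F :: 'i \<Rightarrow> form) A) U x = (\<Sum>a\<in>A. F a U x)"
proof (cases "finite A")
  case True then show ?thesis by (induction A rule: finite_induct) auto
qed simp

lemma wedge_gen_right:
  "wedge a (gen S) U x =
    (if U \<subseteq> {..<6} \<and> S \<subseteq> U then wsign (U - S) S * a (U - S) x else 0)"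
proof (cases "U \<subseteq> {..<6} \<and> S \<subseteq> U")
  case True
  then have "finite (Pow U)" by (auto intro: finite_subset)
  moreover have "(\<Sum>T\<in>Pow U. wsign T (U - T) * a T x * gen S (U - T) x)
      = (\<Sum>T\<in>Pow U. if T = U - S then wsign (U - S) S * a (U - S) x else 0)"
  proof (rule sum.cong)
    fix T assume "T \<in> Pow U"
    then have "U - T = S \<longleftrightarrow> T = U - S" using True by auto
    moreover have "T = U - S \<Longrightarrow> U - T = S" using True by auto
    ultimately show "wsign T (U - T) * a T x * gen S (U - T) x
        = (if T = U - S then wsign (U - S) S * a (U - S) x else 0)"
      by (auto simp: gen_def)
  qed simp
  ultimately show ?thesis using True by (simp add: wedge_def sum.delta')
next
  case False
  then show ?thesis by (auto simp: wedge_def gen_def intro!: sum.neutral)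
qed

lemma dfun_apply: "dfun f T x = (\<Sum>k<6. if T = {k} then Zd k f x else 0)"
  unfolding dfun_def sum_form_apply by (intro sum.cong refl) (simp add: mulf_def gen_def)

lemma wsign_eq_sum:
  assumes "finite S" "finite T"
  shows "wsign S T = (-1) ^ (\<Sum>s\<in>S. card {t\<in>T. t < (s::nat)})"
proof -
  have "{(s, t). s \<in> S \<and> t \<in> T \<and> t < s} = Sigma S (\<lambda>s. {t\<in>T. t < s})" by auto
  then show ?thesis using assms by (simp add: wsign_def card_SigmaI)
qed

lemma Collect_insert_filter:
  "{t \<in> insert a B. P t} = (if P a then insert a {t\<in>B. P t} else {t\<in>B. P t})"
  by auto

lemma card_Collect_eq_conj: "card {t. t = a \<and> P t} = (if P a then 1 else 0)"
proof -
  have "{t. t = a \<and> P t} = (if P a then {a} else {})" by auto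
  then show ?thesis by simp
qed

lemma card_Collect_disj2:
  "a \<noteq> b \<Longrightarrow> card {t. (t = a \<or> t = b) \<and> P t} = (if P a then 1 else 0) + (if P b then 1 else 0)"
proof -
  assume "a \<noteq> b"
  moreover have "{t. (t = a \<or> t = b) \<and> P t} = (if P a then {a} else {}) \<union> (if P b then {b} else {})"
    by auto
  ultimately show ?thesis by simp
qed

lemma card_Collect_disj3:
  "a \<noteq> b \<Longrightarrow> a \<noteq> c \<Longrightarrow> b \<noteq> c \<Longrightarrow> card {t. (t = a \<or> t = b \<or> t = c) \<and> P t}
     = (if P a then 1 else 0) + (if P b then 1 else 0) + (if P c then 1 else 0)"
proof -
  assume "a \<noteq> b" "a \<noteq> c" "b \<noteq> c"
  moreover have "{t. (t = a \<or> t = b \<or> t = c) \<and> P t}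
      = (if P a then {a} else {}) \<union> (if P b then {b} else {}) \<union> (if P c then {c} else {})"
    by auto
  ultimately show ?thesis by (simp add: card_insert_if)
qed

lemma insert3_neq_doubleton:
  assumes "a \<noteq> b" "a \<noteq> c" "b \<noteq> c"
  shows "insert a (insert b (insert c C)) \<noteq> {d, e}"
proof
  assume "insert a (insert b (insert c C)) = {d, e}"
  then have "card {a, b, c} \<le> card {d, e}" by (intro card_mono) auto
  moreover have "card {d, e} \<le> 2" by (simp add: card_insert_if)
  ultimately show False using assms by simp
qed

lemma subset_lessThan6_cases:
  assumes "S \<subseteq> {..<6::nat}"
  obtains b0 b1 b2 b3 b4 b5 where
    "S = (if b0 then {0} else {}) \<union> (if b1 then {1} else {}) \<union> (if b2 then {2} else {})
       \<union> (if b3 then {3} else {}) \<union> (if b4 then {4} else {}) \<union> (if b5 then {5} else {})"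
proof -
  have "s \<in> S \<Longrightarrow> s = 0 \<or> s = 1 \<or> s = 2 \<or> s = 3 \<or> s = 4 \<or> s = 5" for s
    using assms by auto
  then have "S = (if 0 \<in> S then {0} else {}) \<union> (if 1 \<in> S then {1} else {})
      \<union> (if 2 \<in> S then {2} else {}) \<union> (if 3 \<in> S then {3} else {})
      \<union> (if 4 \<in> S then {4} else {}) \<union> (if 5 \<in> S then {5} else {})"
    by (auto split: if_splits)
  then show ?thesis using that by blast
qed

section \<open>The coefficient of \<open>\<psi>\<^sup>2\<^sup>3\<^sup>2\<^sup>3\<close>\<close>

text \<open>The indices of \<open>\<psi>\<^sup>2, \<psi>\<^sup>3, \<psi>\<^sup>2 bar, \<psi>\<^sup>3 bar\<close>.\<close>
definition U23 :: "nat set" where "U23 = {1, 2, 4, 5}"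

lemma U23_subset: "U23 \<subseteq> {..<6}"
  by (auto simp: U23_def)

lemma dmono_U23: "S \<subseteq> {..<6} \<Longrightarrow> dmono S U23 x = 0"
proof -
  assume "S \<subseteq> {..<6}"
  then obtain b0 b1 b2 b3 b4 b5 where S:
    "S = (if b0 then {0} else {}) \<union> (if b1 then {1} else {}) \<union> (if b2 then {2} else {})
       \<union> (if b3 then {3} else {}) \<union> (if b4 then {4} else {}) \<union> (if b5 then {5} else {})"
    by (rule subset_lessThan6_cases)
  show ?thesis
    unfolding dmono_def sum_form_apply S
    apply (cases b0; cases b1; cases b2; cases b3; cases b4; cases b5)
    apply (simp_all only: if_True if_False Un_empty_left Un_empty_right Un_insert_left
        insert_is_Un[symmetric])
    apply (simp_all only: mulf_def wedge_gen_right Collect_insert_filter)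
    apply (simp_all add: mulf_def cst_def U23_def wsign_eq_sum Collect_insert_filter dpsi_def gen_def
        doubleton_eq_iff insert_Diff_if card_Collect_eq_conj card_Collect_disj2 card_Collect_disj3
        insert3_neq_doubleton)
    done
qed

lemma sum_Pow_lessThan6_U23:
  "(\<Sum>S\<in>Pow {..<6::nat}. if S \<subseteq> U23 \<and> U23 - S = {k} then F S else 0)
     = (if k \<in> U23 then F (U23 - {k}) else 0)"
proof -
  have "S \<subseteq> U23 \<and> U23 - S = {k} \<longleftrightarrow> S = U23 - {k} \<and> k \<in> U23" for S
    by blast
  then have "(\<Sum>S\<in>Pow {..<6::nat}. if S \<subseteq> U23 \<and> U23 - S = {k} then F S else 0)
      = (\<Sum>S\<in>Pow {..<6::nat}. if S = U23 - {k} then (if k \<in> U23 then F (U23 - {k}) else 0) else 0)"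
    by (intro sum.cong refl) auto
  also have "\<dots> = (if k \<in> U23 then F (U23 - {k}) else 0)"
  proof -
    have "U23 - {k} \<in> Pow {..<6}" using U23_subset by auto
    then show ?thesis by (simp only: sum.delta finite_Pow_iff finite_lessThan if_True)
  qed
  finally show ?thesis .
qed

lemma ext_d_U23:
  "ext_d \<sigma> U23 x = (\<Sum>k\<in>U23. wsign {k} (U23 - {k}) * Zd k (\<sigma> (U23 - {k})) x)"
proof -
  have wedge_dfun: "wedge (dfun f) (gen S) U23 x
      = (\<Sum>k<6. if S \<subseteq> U23 \<and> U23 - S = {k} then wsign (U23 - S) S * Zd k f x else 0)" for f S
    using U23_subset by (auto simp: wedge_gen_right dfun_apply sum_distrib_left intro!: sum.cong)
  have "ext_d \<sigma> U23 x = (\<Sum>S\<in>Pow {..<6}. wedge (dfun (\<sigma> S)) (gen S) U23 x)"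
    unfolding ext_d_def sum_form_apply by (simp add: mulf_def dmono_U23)
  also have "\<dots> = (\<Sum>k<6. \<Sum>S\<in>Pow {..<6}.
      if S \<subseteq> U23 \<and> U23 - S = {k} then wsign (U23 - S) S * Zd k (\<sigma> S) x else 0)"
    by (simp only: wedge_dfun sum.swap[of _ "Pow {..<6}"])
  also have "\<dots> = (\<Sum>k\<in>{..<6} \<inter> U23.
      wsign (U23 - (U23 - {k})) (U23 - {k}) * Zd k (\<sigma> (U23 - {k})) x)"
    by (simp only: sum_Pow_lessThan6_U23 sum.inter_restrict[OF finite_lessThan])
  also have "\<dots> = (\<Sum>k\<in>U23. wsign {k} (U23 - {k}) * Zd k (\<sigma> (U23 - {k})) x)"
    using U23_subset by (intro sum.cong) (auto simp: Int_absorb1 Diff_Diff_Int)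
  finally show ?thesis .
qed

lemma bideg_ok_U23: "bideg_ok p q U23 \<longleftrightarrow> p = 2 \<and> q = 2"
proof -
  have U23_Int: "U23 \<inter> {0,1,2} = {1,2}" "U23 \<inter> {3,4,5} = {4,5}" by (auto simp: U23_def)
  show ?thesis unfolding bideg_ok_def U23_Int using U23_subset by auto
qed

lemma proj_is_type: "is_type p q \<alpha> \<Longrightarrow> proj p q \<alpha> = \<alpha>"
  unfolding is_type_def proj_def by (intro ext) (metis (mono_tags))

lemma sum_atMost3_delta2:
  "(\<Sum>p\<le>3::nat. \<Sum>q\<le>3::nat. if p = a \<and> q = b then F p q else 0)
     = (if a \<le> 3 \<and> b \<le> 3 then F a b else (0::complex))"
proof -
  have "(\<Sum>p\<le>3::nat. \<Sum>q\<le>3::nat. if p = a \<and> q = b then F p q else 0)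
      = (\<Sum>p\<le>3::nat. if p = a then (\<Sum>q\<le>3::nat. if q = b then F p q else 0) else 0)"
    by (intro sum.cong refl) auto
  also have "\<dots> = (if a \<le> 3 \<and> b \<le> 3 then F a b else 0)"
    by (simp add: sum.delta')
  finally show ?thesis .
qed

lemma del_U23: "is_type 1 2 \<alpha> \<Longrightarrow> del \<alpha> U23 x = ext_d \<alpha> U23 x"
proof -
  assume "is_type 1 2 \<alpha>"
  have "del \<alpha> U23 x = (\<Sum>p\<le>3. \<Sum>q\<le>3. if p = 1 \<and> q = 2 then ext_d (proj p q \<alpha>) U23 x else 0)"
    unfolding del_def sum_form_apply by (intro sum.cong refl) (simp add: proj_def bideg_ok_U23)
  also have "\<dots> = ext_d \<alpha> U23 x"
    by (simp only: sum_atMost3_delta2) (use proj_is_type[OF \<open>is_type 1 2 \<alpha>\<close>] in simp)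
  finally show ?thesis .
qed

lemma delbar_U23: "is_type 2 1 \<alpha> \<Longrightarrow> delbar \<alpha> U23 x = ext_d \<alpha> U23 x"
proof -
  assume "is_type 2 1 \<alpha>"
  have "delbar \<alpha> U23 x = (\<Sum>p\<le>3. \<Sum>q\<le>3. if p = 2 \<and> q = 1 then ext_d (proj p q \<alpha>) U23 x else 0)"
    unfolding delbar_def sum_form_apply by (intro sum.cong refl) (simp add: proj_def bideg_ok_U23)
  also have "\<dots> = ext_d \<alpha> U23 x"
    by (simp only: sum_atMost3_delta2) (use proj_is_type[OF \<open>is_type 2 1 \<alpha>\<close>] in simp)
  finally show ?thesis .
qed

lemma del_delbar_U23:
  assumes "is_type 1 2 \<alpha>" "is_type 2 1 \<beta>"
  shows "del \<alpha> U23 x + delbar \<beta> U23 x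
    = (\<Sum>k\<in>U23. wsign {k} (U23 - {k}) * (Zd k (\<alpha> (U23 - {k})) x + Zd k (\<beta> (U23 - {k})) x))"
  by (simp add: del_U23[OF assms(1)] delbar_U23[OF assms(2)] ext_d_U23 sum.distrib distrib_left)

lemma fundform_apply:
  "fundform h T x = (\<Sum>j<3. \<Sum>k<3. if T = {j, k+3} then \<i> * h j k x else 0)"
proof -
  have "wedge (gen {j}) (gen {k + 3}) T x = (if T = {j, k+3} then 1 else 0)" if "j < 3" "k < 3" for j k
  proof (cases "T = {j, k+3}")
    case True
    moreover have "wsign {j} {k+3} = 1" using that by (simp add: wsign_eq_sum card_Collect_eq_conj)
    moreover have "{j, k+3} - {k+3} = {j}" using that by auto
    ultimately show ?thesis using that by (simp only: wedge_gen_right) (simp add: gen_def)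
  next
    case False
    then show ?thesis by (simp only: wedge_gen_right) (auto simp: gen_def)
  qed
  then show ?thesis
    unfolding fundform_def sum_form_apply by (auto simp: mulf_def intro!: sum.cong)
qed

lemma sum_Pow_insert:
  assumes "a \<notin> A" "finite A"
  shows "(\<Sum>S\<in>Pow (insert a A). f S) = (\<Sum>S\<in>Pow A. f S) + (\<Sum>S\<in>Pow A. f (insert a S))"
proof -
  have "inj_on (insert a) (Pow A)"
    using assms(1) unfolding inj_on_def by (metis PowD insert_ident subset_iff)
  moreover have "Pow A \<inter> insert a ` Pow A = {}" using assms(1) by auto
  ultimately show ?thesis
    unfolding Pow_insert using assms(2) by (simp add: sum.union_disjoint sum.reindex)
qed

lemma sum_Pow_U23:
  "(\<Sum>S\<in>Pow U23. f S) = f {} + f {5} + f {4} + f {4,5} + f {2} + f {2,5} + f {2,4} + f {2,4,5}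
     + f {1} + f {1,5} + f {1,4} + f {1,4,5} + f {1,2} + f {1,2,5} + f {1,2,4} + f {1,2,4,5}"
  by (simp add: U23_def sum_Pow_insert add.assoc)

lemma omega2_U23:
  "wedge (fundform h) (fundform h) U23 x = 2 * (h 1 1 x * h 2 2 x - h 1 2 x * h 2 1 x)"
proof -
  have ff: "fundform h {1,4} x = \<i> * h 1 1 x" "fundform h {1,5} x = \<i> * h 1 2 x"
    "fundform h {2,4} x = \<i> * h 2 1 x" "fundform h {2,5} x = \<i> * h 2 2 x"
    "fundform h {} x = 0" "fundform h {5} x = 0" "fundform h {4} x = 0" "fundform h {4,5} x = 0"
    "fundform h {2} x = 0" "fundform h {1} x = 0" "fundform h {1,2} x = 0"
    "fundform h {2,4,5} x = 0" "fundform h {1,4,5} x = 0" "fundform h {1,2,5} x = 0"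
    "fundform h {1,2,4} x = 0" "fundform h {1,2,4,5} x = 0"
    by (simp_all add: fundform_apply lessThan_nat_numeral doubleton_eq_iff insert3_neq_doubleton)
  have ws: "wsign {1,4} {2,5} = -1" "wsign {1,5} {2,4} = 1"
    "wsign {2,4} {1,5} = 1" "wsign {2,5} {1,4} = -1"
    by (simp_all add: wsign_eq_sum Collect_insert_filter card_Collect_eq_conj card_Collect_disj2)
  have "wedge (fundform h) (fundform h) U23 x
      = (\<Sum>S\<in>Pow U23. wsign S (U23 - S) * fundform h S x * fundform h (U23 - S) x)"
    using U23_subset by (simp add: wedge_def)
  also have "\<dots> = 2 * (h 1 1 x * h 2 2 x - h 1 2 x * h 2 1 x)"
    unfolding sum_Pow_U23 unfolding U23_def
    apply (simp only: insert_Diff_if insert_iff empty_iff Diff_empty)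
    apply (simp add: ff[simplified] ws[simplified] algebra_simps)
    done
  finally show ?thesis .
qed

lemma sum_lessThan3: "(\<Sum>j<3::nat. f j) = f 0 + f 1 + f 2"
  by (simp add: lessThan_nat_numeral add_ac)

lemma hermitian_minor23_pos:
  assumes hm: "hermitian_metric h" and x: "x \<in> Mspace"
  shows "0 < Re (h 1 1 x * h 2 2 x - h 1 2 x * h 2 1 x)"
proof -
  have herm: "\<And>j k. j < 3 \<Longrightarrow> k < 3 \<Longrightarrow> h k j x = cnj (h j k x)"
    using hm x unfolding hermitian_metric_def by blast
  have pos: "\<And>v. (\<exists>j<3. v j \<noteq> 0) \<Longrightarrow> 0 < Re (\<Sum>j<3. \<Sum>k<3. h j k x * v j * cnj (v k))"
    using hm x unfolding hermitian_metric_def by blast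
  define a b d where "a = h 1 1 x" and "b = h 1 2 x" and "d = h 2 2 x"
  have ha: "cnj a = a" using herm[of 1 1] by (simp add: a_def)
  have hb: "h 2 1 x = cnj b" using herm[of 1 2] by (simp add: b_def)
  have a1: "h (Suc 0) (Suc 0) x = a" and b1: "h (Suc 0) 2 x = b" and hb1: "h 2 (Suc 0) x = cnj b"
    using hb by (simp_all add: a_def b_def)
  have "0 < Re (\<Sum>j<3. \<Sum>k<3. h j k x * (if j = 1 then 1 else 0) * cnj (if k = 1 then 1 else 0))"
    by (rule pos) (rule exI[of _ 1], simp)
  then have apos: "0 < Re a" by (simp add: sum_lessThan3 a_def)
  text \<open>Positivity on \<open>v = (0, -b bar, a)\<close> gives \<open>Re a \<cdot> (a d - |b|\<^sup>2) > 0\<close>.\<close>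
  define v where "v = (\<lambda>j::nat. if j = 1 then - cnj b else if j = 2 then a else 0)"
  have "v 2 \<noteq> 0" using apos by (auto simp: v_def)
  then have "0 < Re (\<Sum>j<3. \<Sum>k<3. h j k x * v j * cnj (v k))"
    by (intro pos) (rule exI[of _ 2], simp)
  also have "(\<Sum>j<3. \<Sum>k<3. h j k x * v j * cnj (v k))
      = a * (cnj b * b) + b * (- cnj b) * cnj a + cnj b * a * (- b) + d * a * cnj a"
    by (simp add: sum_lessThan3 v_def a1 b1 hb1 d_def[symmetric] algebra_simps)
  also have "\<dots> = a * (a * d - b * cnj b)" using ha by (simp add: algebra_simps)
  also have "Re (a * (a * d - b * cnj b)) = Re a * Re (a * d - b * cnj b)"
    using arg_cong[OF ha, of Im] by simp
  finally have "0 < Re (a * d - b * cnj b)" using apos by (simp add: zero_less_mult_iff)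
  then show ?thesis using hb1 by (simp add: a_def b_def d_def hb)
qed

lemma qmult_eq_components: "qmult x y =
  (fst x * fst y - fst (snd x) * fst (snd y) - fst (snd (snd x)) * fst (snd (snd y))
     - snd (snd (snd x)) * snd (snd (snd y)),
   fst x * fst (snd y) + fst (snd x) * fst y + fst (snd (snd x)) * snd (snd (snd y))
     - snd (snd (snd x)) * fst (snd (snd y)),
   fst x * fst (snd (snd y)) - fst (snd x) * snd (snd (snd y)) + fst (snd (snd x)) * fst y
     + snd (snd (snd x)) * fst (snd y),
   fst x * snd (snd (snd y)) + fst (snd x) * fst (snd (snd y)) - fst (snd (snd x)) * fst (snd y)
     + snd (snd (snd x)) * fst y)"
  by (cases x rule: prod_cases4; cases y rule: prod_cases4) simp

lemma qnorm2_eq_components: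
  "qnorm2 x = (fst x)^2 + (fst (snd x))^2 + (fst (snd (snd x)))^2 + (snd (snd (snd x)))^2"
  by (cases x rule: prod_cases4) simp

lemma qnorm2_mult: "qnorm2 (qmult x y) = qnorm2 x * qnorm2 y"
  by (cases x rule: prod_cases4; cases y rule: prod_cases4) (simp add: power2_eq_square algebra_simps)

lemma qmult_assoc: "qmult (qmult x y) z = qmult x (qmult y z)"
  by (cases x rule: prod_cases4; cases y rule: prod_cases4; cases z rule: prod_cases4)
    (simp add: algebra_simps)

lemma qmult_right_one: "qmult x (1, 0, 0, 0) = x"
  by (cases x rule: prod_cases4) simp

lemma qmult_add_left: "qmult (x + y) e = qmult x e + qmult y e"
  by (cases x rule: prod_cases4; cases y rule: prod_cases4; cases e rule: prod_cases4)
    (simp add: algebra_simps)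

lemma qmult_scaleR_left: "qmult (c *\<^sub>R x) e = c *\<^sub>R qmult x e"
  by (cases x rule: prod_cases4; cases e rule: prod_cases4) (simp add: algebra_simps)

lemma qnorm2_scaleR: "qnorm2 (c *\<^sub>R x) = c^2 * qnorm2 x"
  by (cases x rule: prod_cases4) (simp add: algebra_simps power_mult_distrib)

lemma qnorm2_nonneg: "0 \<le> qnorm2 x"
  by (cases x rule: prod_cases4) simp

lemma norm_quat: "norm (x::quat) = sqrt (qnorm2 x)"
  by (cases x rule: prod_cases4) (simp add: norm_prod_def add.assoc)

lemma qexp_add: "qmult (qexp a s) (qexp a t) = qexp a (s + t)"
  by (simp add: qexp_def cos_add sin_add algebra_simps)

lemma qnorm2_qexp: "qnorm2 (qexp a t) = 1"
  by (simp add: qexp_def)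

lemma flow_flow: "flow i s (flow i t p) = flow i (t + s) p"
  by (simp add: flow_def qmult_assoc qexp_add)

lemma flow_zero: "flow i 0 p = p"
  by (simp add: flow_def qexp_def qmult_right_one)

lemma flow_Mspace: "p \<in> Mspace \<Longrightarrow> flow i t p \<in> Mspace"
  by (auto simp: flow_def Mspace_def SU2_def qnorm2_mult qnorm2_qexp)

lemma qnorm2_flow:
  "qnorm2 (fst (flow i t y)) = qnorm2 (fst y)" "qnorm2 (snd (flow i t y)) = qnorm2 (snd y)"
  by (simp_all add: flow_def qnorm2_mult qnorm2_qexp)

lemma linear_flow: "linear (flow i t)"
  by (rule linearI) (simp_all add: flow_def qmult_add_left qmult_scaleR_left)

lemma continuous_on_qmult [continuous_intros]:
  "continuous_on S f \<Longrightarrow> continuous_on S g \<Longrightarrow> continuous_on S (\<lambda>x. qmult (f x) (g x))"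
  unfolding qmult_eq_components by (intro continuous_intros)

lemma continuous_on_qexp [continuous_intros]:
  fixes S :: "'a::metric_space set"
  shows "continuous_on S f \<Longrightarrow> continuous_on S (\<lambda>x. qexp a (f x))"
  by (cases "a = 0"; cases "a = 1")
    (auto simp: qexp_def intro!: continuous_on_Pair continuous_on_cos continuous_on_sin continuous_on_const)

lemma continuous_on_flow [continuous_intros]:
  fixes S :: "'a::metric_space set"
  shows "continuous_on S f \<Longrightarrow> continuous_on S g \<Longrightarrow> continuous_on S (\<lambda>x. flow i (f x) (g x))"
  by (cases "i < 3"; cases "i < 6")
    (simp_all add: flow_def continuous_on_Pair continuous_on_fst continuous_on_snd continuous_on_qexp
      continuous_on_qmult)

lemma continuous_on_compose_flow:
  "continuous_on Mspace G \<Longrightarrow> continuous_on Mspace (\<lambda>p. G (flow i t p))"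
  by (rule continuous_on_compose2[OF _ continuous_on_flow[OF continuous_on_const continuous_on_id]])
    (auto simp: flow_Mspace)

lemma compact_Mspace: "compact Mspace"
proof -
  have "closed SU2"
    unfolding SU2_def qnorm2_eq_components by (intro closed_Collect_eq continuous_intros)
  moreover have "bounded SU2"
    unfolding bounded_iff by (auto simp: SU2_def norm_quat)
  ultimately have "compact SU2" by (simp add: compact_eq_bounded_closed)
  then show ?thesis by (simp add: Mspace_def compact_Times)
qed

lemma smooth_fun_continuous: "smooth_fun f \<Longrightarrow> continuous_on Mspace f"
  unfolding smooth_fun_def by (metis lder.simps(1))

lemma smooth_fun_Xd_continuous: "smooth_fun f \<Longrightarrow> continuous_on Mspace (Xd i f)"
  unfolding smooth_fun_def by (metis lder.simps)

lemma has_vector_derivative_flow: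
  assumes f: "smooth_fun f" and i: "i < 6" and p: "p \<in> Mspace"
  shows "((\<lambda>s. f (flow i s p)) has_vector_derivative Xd i f (flow i s p)) (at s)"
proof -
  define q where "q = flow i s p"
  have "q \<in> Mspace" using p by (simp add: q_def flow_Mspace)
  then have "(\<lambda>t. f (flow i t q)) differentiable (at 0)"
    using f i unfolding smooth_fun_def by (metis lder.simps(1))
  then have "((\<lambda>t. f (flow i t q)) has_vector_derivative Xd i f q) (at 0)"
    by (simp add: Xd_def vector_derivative_works)
  moreover have "((\<lambda>u. u - s) has_vector_derivative 1) (at s)"
    by (auto intro!: derivative_eq_intros)
  ultimately have "(((\<lambda>t. f (flow i t q)) \<circ> (\<lambda>u. u - s)) has_vector_derivative (1 *\<^sub>R Xd i f q)) (at s)"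
    by (intro vector_diff_chain_at) simp_all
  moreover have "(\<lambda>t. f (flow i t q)) \<circ> (\<lambda>u. u - s) = (\<lambda>u. f (flow i u p))"
    by (simp add: q_def flow_flow o_def)
  ultimately show ?thesis by (simp add: q_def)
qed

text \<open>The mean value estimate is uniform in \<open>p\<close> because \<open>(s, p) \<mapsto> Xd i f (flow i s p)\<close> is
  uniformly continuous on the compact set \<open>[-1, 1] \<times> M\<close>.\<close>
lemma flow_difference_quotient_approx:
  assumes f: "smooth_fun f" and i: "i < 6" and e: "0 < e"
  obtains t :: real where "0 < t"
    "\<And>p. p \<in> Mspace \<Longrightarrow> norm ((1 / complex_of_real t) * (f (flow i t p) - f p) - Xd i f p) \<le> e"
proof -
  define D where "D = Xd i f"
  define S where "S = {-1..1::real} \<times> Mspace"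
  have "continuous_on S (\<lambda>x. D (flow i (fst x) (snd x)))"
    by (rule continuous_on_compose2[OF smooth_fun_Xd_continuous[OF f, of i, folded D_def]])
      (auto simp: S_def flow_Mspace intro!: continuous_intros)
  moreover have "compact S" by (simp add: S_def compact_Times compact_Mspace)
  ultimately have "uniformly_continuous_on S (\<lambda>x. D (flow i (fst x) (snd x)))"
    by (rule compact_uniformly_continuous)
  then obtain d where d: "d > 0" and dd: "\<And>x x'. x \<in> S \<Longrightarrow> x' \<in> S \<Longrightarrow> dist x' x < d \<Longrightarrow>
      dist (D (flow i (fst x') (snd x'))) (D (flow i (fst x) (snd x))) < e"
    using e unfolding uniformly_continuous_on_def by metis
  define t where "t = min (d/2) (1/2)"
  have t: "0 < t" "t < d" "t \<le> 1" using d by (auto simp: t_def)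
  have "norm ((1 / complex_of_real t) * (f (flow i t p) - f p) - D p) \<le> e" if p: "p \<in> Mspace" for p
  proof -
    have "norm (f (flow i t p) - f (flow i 0 p) - (t - 0) *\<^sub>R D (flow i 0 p)) \<le> norm (t - 0) * e"
    proof (rule differentiable_bound_linearization[where S="{0..t}"])
      show "\<And>u. u \<in> {0..1} \<Longrightarrow> 0 + u *\<^sub>R (t - 0) \<in> {0..t}"
        using t by (auto simp: mult_le_cancel_right1 mult_left_le_one_le)
      show "((\<lambda>s. f (flow i s p)) has_derivative (\<lambda>h. h *\<^sub>R D (flow i x p))) (at x within {0..t})"
        if "x \<in> {0..t}" for x
        using has_vector_derivative_flow[OF f i p, of x] unfolding D_def has_vector_derivative_def
        by (rule has_derivative_at_withinI)
      show "onorm ((\<lambda>h. h *\<^sub>R D (flow i x p)) - (\<lambda>h. h *\<^sub>R D (flow i 0 p))) \<le> e"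
        if x: "x \<in> {0..t}" for x
      proof (rule onorm_le)
        fix h :: real
        have "(x, p) \<in> S" "(0, p) \<in> S" "dist (x, p) (0, p) < d"
          using x t p by (auto simp: S_def dist_Pair_Pair dist_real_def)
        then have "norm (D (flow i x p) - D (flow i 0 p)) \<le> e"
          using dd by (fastforce simp: dist_norm)
        then have "\<bar>h\<bar> * norm (D (flow i x p) - D (flow i 0 p)) \<le> \<bar>h\<bar> * e"
          by (simp add: mult_left_mono)
        then show "norm (((\<lambda>h. h *\<^sub>R D (flow i x p)) - (\<lambda>h. h *\<^sub>R D (flow i 0 p))) h) \<le> e * norm h"
          by (simp add: scaleR_diff_right[symmetric] mult.commute)
      qed
    qed (use t in auto)
    then have "norm (f (flow i t p) - f p - t *\<^sub>R D p) \<le> t * e" using t by (simp add: flow_zero)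
    moreover have "(1 / complex_of_real t) * (f (flow i t p) - f p) - D p
        = (1 / complex_of_real t) * (f (flow i t p) - f p - t *\<^sub>R D p)"
      using t by (simp add: scaleR_conv_of_real field_simps)
    ultimately show ?thesis
      using t by (simp add: norm_mult norm_divide divide_le_eq mult.commute)
  qed
  then show ?thesis using that t(1) by (simp add: D_def)
qed

section \<open>An invariant integral over \<open>M\<close>\<close>

lemma exhaust_8:
  fixes x :: 8
  shows "x = 1 \<or> x = 2 \<or> x = 3 \<or> x = 4 \<or> x = 5 \<or> x = 6 \<or> x = 7 \<or> x = 8"
proof (induct x)
  case (of_int z)
  then have "z = 0 \<or> z = 1 \<or> z = 2 \<or> z = 3 \<or> z = 4 \<or> z = 5 \<or> z = 6 \<or> z = 7" by fastforce
  then show ?case by auto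
qed

lemma sum_UNIV_8: "sum f (UNIV :: 8 set) = f 1 + f 2 + f 3 + f 4 + f 5 + f 6 + f 7 + f 8"
proof -
  have UNIV_8: "(UNIV :: 8 set) = {1,2,3,4,5,6,7,8}" using exhaust_8 by auto
  show ?thesis unfolding UNIV_8 by (simp add: ac_simps)
qed

definition pt_of_vec :: "real^8 \<Rightarrow> pt" where
  "pt_of_vec v = ((v$1, v$2, v$3, v$4), (v$5, v$6, v$7, v$8))"

definition vec_of_pt :: "pt \<Rightarrow> real^8" where
  "vec_of_pt y = (\<chi> j. if j = 1 then fst (fst y) else if j = 2 then fst (snd (fst y))
     else if j = 3 then fst (snd (snd (fst y))) else if j = 4 then snd (snd (snd (fst y)))
     else if j = 5 then fst (snd y) else if j = 6 then fst (snd (snd y))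
     else if j = 7 then fst (snd (snd (snd y))) else snd (snd (snd (snd y))))"

lemma pt_of_vec_of_pt [simp]: "pt_of_vec (vec_of_pt y) = y"
  by (simp add: pt_of_vec_def vec_of_pt_def)

lemma vec_of_pt_of_vec [simp]: "vec_of_pt (pt_of_vec v) = v"
  using exhaust_8 by (auto simp: vec_eq_iff pt_of_vec_def vec_of_pt_def)

lemma norm_vec_eq_qnorm2:
  "norm v = sqrt (qnorm2 (fst (pt_of_vec v)) + qnorm2 (snd (pt_of_vec v)))"
  unfolding norm_vec_def L2_set_def sum_UNIV_8 by (simp add: pt_of_vec_def add.assoc)

definition vflow :: "nat \<Rightarrow> real \<Rightarrow> real^8 \<Rightarrow> real^8" where
  "vflow i t v = vec_of_pt (flow i t (pt_of_vec v))"

lemma orthogonal_transformation_vflow: "orthogonal_transformation (vflow i t)"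
proof -
  have "linear pt_of_vec" by (rule linearI) (simp_all add: pt_of_vec_def)
  moreover have "linear vec_of_pt" by (rule linearI) (simp_all add: vec_of_pt_def vec_eq_iff)
  moreover have "vflow i t = vec_of_pt \<circ> (flow i t \<circ> pt_of_vec)" by (simp add: vflow_def fun_eq_iff)
  ultimately have "linear (vflow i t)" using linear_flow by (simp add: linear_compose)
  moreover have "norm (vflow i t v) = norm v" for v
    by (simp add: norm_vec_eq_qnorm2 vflow_def qnorm2_flow)
  ultimately show ?thesis by (simp add: orthogonal_transformation)
qed

text \<open>\<open>M\<close> is the image of the shell \<open>1 \<le> |p|\<^sup>2, |q|\<^sup>2 \<le> 4\<close> in \<open>\<real>\<^sup>8\<close> under radial projection
  in each factor.  The flows preserve the shell and commute with the projection, so pulling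
  a function back to the shell and integrating gives an integral on \<open>M\<close> invariant under
  all flows.\<close>
definition shell :: "(real^8) set" where
  "shell = {v. 1 \<le> qnorm2 (fst (pt_of_vec v)) \<and> qnorm2 (fst (pt_of_vec v)) \<le> 4
     \<and> 1 \<le> qnorm2 (snd (pt_of_vec v)) \<and> qnorm2 (snd (pt_of_vec v)) \<le> 4}"

definition qnormalize :: "quat \<Rightarrow> quat" where
  "qnormalize q = (1 / sqrt (qnorm2 q)) *\<^sub>R q"

definition shell_proj :: "real^8 \<Rightarrow> pt" where
  "shell_proj v = (qnormalize (fst (pt_of_vec v)), qnormalize (snd (pt_of_vec v)))"

definition Mint :: "(pt \<Rightarrow> complex) \<Rightarrow> complex" where
  "Mint G = integral shell (\<lambda>v. G (shell_proj v))"

definition shell_vol :: real where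
  "shell_vol = integral shell (\<lambda>v. 1)"

lemma shell_proj_vflow: "shell_proj (vflow i t v) = flow i t (shell_proj v)"
  by (simp add: shell_proj_def vflow_def flow_def qnormalize_def qnorm2_mult qnorm2_qexp
      qmult_scaleR_left)

lemma vflow_shell: "vflow i t ` shell = shell"
proof
  show "vflow i t ` shell \<subseteq> shell" by (auto simp: shell_def vflow_def qnorm2_flow)
  show "shell \<subseteq> vflow i t ` shell"
  proof
    fix v assume v: "v \<in> shell"
    have "vflow i t (vflow i (-t) v) = v" by (simp add: vflow_def flow_flow flow_zero)
    moreover have "vflow i (-t) v \<in> shell" using v by (auto simp: shell_def vflow_def qnorm2_flow)
    ultimately show "v \<in> vflow i t ` shell" by (metis image_eqI)
  qed
qed

lemma shell_proj_Mspace: "v \<in> shell \<Longrightarrow> shell_proj v \<in> Mspace"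
  using qnorm2_nonneg
  by (auto simp: shell_proj_def Mspace_def SU2_def shell_def qnormalize_def qnorm2_scaleR
      power_divide)

lemma compact_shell: "compact shell"
proof -
  have "closed shell" unfolding shell_def qnorm2_eq_components pt_of_vec_def
    by (intro closed_Collect_conj closed_Collect_le continuous_intros)
  moreover have "bounded shell"
    unfolding bounded_iff by (rule exI[of _ "sqrt 8"]) (auto simp: shell_def norm_vec_eq_qnorm2)
  ultimately show ?thesis by (simp add: compact_eq_bounded_closed)
qed

lemma continuous_on_shell_proj_compose:
  assumes "continuous_on Mspace G"
  shows "continuous_on shell (\<lambda>v. G (shell_proj v))"
proof -
  have "continuous_on shell shell_proj"
    unfolding shell_proj_def qnormalize_def qnorm2_eq_components pt_of_vec_def
    by (intro continuous_intros) (auto simp: shell_def pt_of_vec_def qnorm2_eq_components)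
  then show ?thesis
    using continuous_on_compose2[OF assms] shell_proj_Mspace by blast
qed

lemma absolutely_integrable_on_compact:
  fixes f :: "real^'n \<Rightarrow> 'b::euclidean_space"
  assumes "compact S" "continuous_on S f"
  shows "f absolutely_integrable_on S"
proof -
  have "integrable lborel (\<lambda>x. indicator S x *\<^sub>R f x)" by (rule borel_integrable_compact[OF assms])
  then show ?thesis
    unfolding set_integrable_def using integrable_completion borel_measurable_integrable by blast
qed

lemma integrable_on_shell_proj_compose:
  "continuous_on Mspace (G :: pt \<Rightarrow> complex) \<Longrightarrow> (\<lambda>v. G (shell_proj v)) integrable_on shell"
  using set_lebesgue_integral_eq_integral(1) absolutely_integrable_on_compact compact_shell
    continuous_on_shell_proj_compose by blast

lemma integral_orthogonal_transformation_invariant: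
  fixes g :: "real^'n::{finite,wellorder} \<Rightarrow> real"
  assumes T: "orthogonal_transformation T" and TK: "T ` K = K"
    and g: "g absolutely_integrable_on K"
  shows "integral K (\<lambda>v. g (T v)) = integral K g"
proof -
  define f where "f = (\<lambda>v. vec (g v) :: real^1)"
  have "bounded_linear (vec :: real \<Rightarrow> real^1)"
    using linear_conv_bounded_linear linear_vec by blast
  from absolutely_integrable_linear[OF g this]
  have fi: "f absolutely_integrable_on K" by (simp add: f_def o_def)
  have lin: "linear T" using T by (simp add: orthogonal_transformation_linear)
  have "integral (T ` K) f = \<bar>det (matrix T)\<bar> *\<^sub>R integral K (f \<circ> T)"
    by (rule integral_change_of_variables_linear[OF lin]) (use fi TK in simp)
  then have eq: "integral K f = integral K (f \<circ> T)" using TK T by simp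
  have fT: "(f \<circ> T) absolutely_integrable_on K"
    using absolutely_integrable_change_of_variables_linear[OF lin, where f=f and S=K] fi TK T
    by (simp add: o_def)
  have "integral K f $ 1 = integral K g"
    using integral_component_eq_cart[OF set_lebesgue_integral_eq_integral(1)[OF fi], of 1]
    by (simp add: f_def)
  moreover have "integral K (f \<circ> T) $ 1 = integral K (\<lambda>v. g (T v))"
    using integral_component_eq_cart[OF set_lebesgue_integral_eq_integral(1)[OF fT], of 1]
    by (simp add: f_def o_def)
  ultimately show ?thesis using eq by simp
qed

lemma Mint_add:
  "continuous_on Mspace G \<Longrightarrow> continuous_on Mspace H \<Longrightarrow> Mint (\<lambda>p. G p + H p) = Mint G + Mint H"
  unfolding Mint_def by (rule integral_add) (auto intro: integrable_on_shell_proj_compose)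

lemma Mint_diff:
  "continuous_on Mspace G \<Longrightarrow> continuous_on Mspace H \<Longrightarrow> Mint (\<lambda>p. G p - H p) = Mint G - Mint H"
  unfolding Mint_def by (rule integral_diff) (auto intro: integrable_on_shell_proj_compose)

lemma Mint_cmult: "continuous_on Mspace G \<Longrightarrow> Mint (\<lambda>p. c * G p) = c * Mint G"
  unfolding Mint_def
  using integral_linear[OF integrable_on_shell_proj_compose bounded_linear_mult_right]
  by (simp add: o_def)

lemma Mint_cong: "(\<And>p. p \<in> Mspace \<Longrightarrow> G p = H p) \<Longrightarrow> Mint G = Mint H"
  unfolding Mint_def using shell_proj_Mspace by (intro integral_cong) auto

lemma Mint_sum:
  "finite A \<Longrightarrow> (\<And>a. a \<in> A \<Longrightarrow> continuous_on Mspace (G a))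
     \<Longrightarrow> Mint (\<lambda>p. \<Sum>a\<in>A. G a p) = (\<Sum>a\<in>A. Mint (G a))"
proof (induction A rule: finite_induct)
  case empty then show ?case by (simp add: Mint_def)
next
  case (insert a A)
  then have "Mint (\<lambda>p. G a p + (\<Sum>a\<in>A. G a p)) = Mint (G a) + Mint (\<lambda>p. \<Sum>a\<in>A. G a p)"
    by (intro Mint_add) (auto intro!: continuous_intros)
  with insert show ?case by simp
qed

lemma integral_shell_const: "integral shell (\<lambda>v. B) = B * shell_vol"
proof -
  have "(\<lambda>v. 1::real) integrable_on shell"
    by (rule integrable_on_const[OF lmeasurable_compact[OF compact_shell]])
  from integral_linear[OF this bounded_linear_mult_right[of B]] show ?thesis
    by (simp add: shell_vol_def o_def)
qed

lemma Mint_norm_bound: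
  assumes "continuous_on Mspace G" "\<And>p. p \<in> Mspace \<Longrightarrow> norm (G p) \<le> B"
  shows "norm (Mint G) \<le> B * shell_vol"
proof -
  have "norm (Mint G) \<le> integral shell (\<lambda>v. B)"
    unfolding Mint_def
    by (rule integral_norm_bound_integral[OF integrable_on_shell_proj_compose[OF assms(1)]
          integrable_on_const[OF lmeasurable_compact[OF compact_shell]]])
      (use assms(2) shell_proj_Mspace in auto)
  then show ?thesis by (simp add: integral_shell_const)
qed

lemma Mint_flow_invariant:
  assumes G: "continuous_on Mspace G"
  shows "Mint (\<lambda>p. G (flow i t p)) = Mint G"
proof -
  have cont: "continuous_on shell (\<lambda>v. G (shell_proj v))"
    by (rule continuous_on_shell_proj_compose[OF G])
  have int_flow: "(\<lambda>v. G (shell_proj (vflow i t v))) integrable_on shell"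
    using integrable_on_shell_proj_compose[OF continuous_on_compose_flow[OF G]]
    by (simp add: shell_proj_vflow)
  have int: "(\<lambda>v. G (shell_proj v)) integrable_on shell"
    by (rule integrable_on_shell_proj_compose[OF G])
  have "integral shell (\<lambda>v. Re (G (shell_proj (vflow i t v)))) = integral shell (\<lambda>v. Re (G (shell_proj v)))"
    "integral shell (\<lambda>v. Im (G (shell_proj (vflow i t v)))) = integral shell (\<lambda>v. Im (G (shell_proj v)))"
    by (intro integral_orthogonal_transformation_invariant[OF orthogonal_transformation_vflow vflow_shell]
        absolutely_integrable_on_compact[OF compact_shell] continuous_intros cont)+
  then show ?thesis
    using integral_linear[OF int_flow bounded_linear_Re] integral_linear[OF int bounded_linear_Re]
      integral_linear[OF int_flow bounded_linear_Im] integral_linear[OF int bounded_linear_Im]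
    by (simp add: Mint_def shell_proj_vflow complex_eq_iff o_def)
qed

lemma cbox_subset_shell:
  "cbox (\<chi> i. if i = 1 \<or> i = 5 then 1 else 0) (\<chi> i. if i = 1 \<or> i = 5 then 3/2 else 1/2) \<subseteq> shell"
proof
  fix v :: "real^8"
  assume "v \<in> cbox (\<chi> i. if i = 1 \<or> i = 5 then 1 else 0) (\<chi> i. if i = 1 \<or> i = 5 then 3/2 else 1/2)"
  then have v: "\<And>i. (if i = 1 \<or> i = 5 then 1 else 0) \<le> v $ i \<and> v $ i \<le> (if i = 1 \<or> i = 5 then 3/2 else 1/2)"
    by (simp add: mem_box_cart)
  have big: "1 \<le> (v$i)^2 \<and> (v$i)^2 \<le> 9/4" if "i = 1 \<or> i = 5" for i
  proof -
    have "(v$i)^2 \<le> (3/2)^2" by (rule power_mono) (use v[of i] that in auto)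
    moreover have "1 \<le> (v$i)^2" using v[of i] that by (simp add: one_le_power)
    ultimately show ?thesis by (simp add: power2_eq_square)
  qed
  have small: "(v$i)^2 \<le> 1/4" if "i \<noteq> 1" "i \<noteq> 5" for i
    using v[of i] that power_mono[of "v$i" "1/2" 2] by (auto simp: power2_eq_square)
  show "v \<in> shell"
    unfolding shell_def pt_of_vec_def mem_Collect_eq qnorm2.simps fst_conv snd_conv
    using big[of 1, simplified] big[of 5, simplified] small[of 2, simplified]
      small[of 3, simplified] small[of 4, simplified] small[of 6, simplified]
      small[of 7, simplified] small[of 8, simplified]
      zero_le_power2[of "v$2"] zero_le_power2[of "v$3"] zero_le_power2[of "v$4"]
      zero_le_power2[of "v$6"] zero_le_power2[of "v$7"] zero_le_power2[of "v$8"]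
    by linarith
qed

lemma shell_vol_pos: "0 < shell_vol"
proof -
  define a b :: "real^8" where "a = (\<chi> i. if i = 1 \<or> i = 5 then 1 else 0)"
    and "b = (\<chi> i. if i = 1 \<or> i = 5 then 3/2 else 1/2)"
  have "a \<in> cbox a b" by (simp add: mem_box_cart a_def b_def)
  then have "measure lborel (cbox a b) = (\<Prod>i\<in>UNIV. b$i - a$i)"
    by (intro content_cbox_cart) blast
  also have "\<dots> > 0" by (rule prod_pos) (simp add: a_def b_def)
  also have "measure lborel (cbox a b) = integral (cbox a b) (\<lambda>v. 1::real)" by simp
  also have "\<dots> \<le> shell_vol" unfolding shell_vol_def
    by (rule integral_subset_le[OF cbox_subset_shell[folded a_def b_def]])
      (auto intro: integrable_on_const lmeasurable_compact compact_shell)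
  finally show ?thesis .
qed

lemma Mint_pos:
  assumes G: "continuous_on Mspace G" and pos: "\<And>p. p \<in> Mspace \<Longrightarrow> 0 < Re (G p)"
  shows "0 < Re (Mint G)"
proof -
  have "shell \<noteq> {}" using shell_vol_pos by (auto simp: shell_vol_def)
  moreover have cont: "continuous_on shell (\<lambda>v. Re (G (shell_proj v)))"
    by (intro continuous_intros continuous_on_shell_proj_compose[OF G])
  ultimately obtain v0 where v0: "v0 \<in> shell"
    "\<And>v. v \<in> shell \<Longrightarrow> Re (G (shell_proj v0)) \<le> Re (G (shell_proj v))"
    using continuous_attains_inf[OF compact_shell] by blast
  have "0 < Re (G (shell_proj v0)) * shell_vol"
    using pos shell_proj_Mspace v0(1) shell_vol_pos by simp
  also have "\<dots> = integral shell (\<lambda>v. Re (G (shell_proj v0)))" by (simp add: integral_shell_const)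
  also have "\<dots> \<le> integral shell (\<lambda>v. Re (G (shell_proj v)))"
    by (rule integral_le) (auto intro: integrable_on_const lmeasurable_compact compact_shell v0(2)
        set_lebesgue_integral_eq_integral(1) absolutely_integrable_on_compact[OF compact_shell cont])
  also have "\<dots> = Re (Mint G)"
    using integral_linear[OF integrable_on_shell_proj_compose[OF G] bounded_linear_Re]
    by (simp add: Mint_def o_def)
  finally show ?thesis .
qed

section \<open>Integrals of derivatives along the frame vanish\<close>

lemma Mint_Xd_eq_0:
  assumes f: "smooth_fun f" and i: "i < 6"
  shows "Mint (Xd i f) = 0"
proof -
  have fc: "continuous_on Mspace f" by (rule smooth_fun_continuous[OF f])
  have Dc: "continuous_on Mspace (Xd i f)" by (rule smooth_fun_Xd_continuous[OF f])
  have bound: "norm (Mint (Xd i f)) \<le> e * shell_vol" if "e > 0" for e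
  proof -
    obtain t :: real where t: "0 < t" and approx: "\<And>p. p \<in> Mspace \<Longrightarrow>
        norm ((1 / complex_of_real t) * (f (flow i t p) - f p) - Xd i f p) \<le> e"
      using flow_difference_quotient_approx[OF f i \<open>e > 0\<close>] by blast
    have quot: "continuous_on Mspace (\<lambda>p. (1 / complex_of_real t) * (f (flow i t p) - f p))"
      by (intro continuous_intros continuous_on_compose_flow fc)
    text \<open>The integral of a difference quotient vanishes by invariance.\<close>
    have "Mint (\<lambda>p. (1 / complex_of_real t) * (f (flow i t p) - f p))
        = (1 / complex_of_real t) * (Mint (\<lambda>p. f (flow i t p)) - Mint f)"
      by (subst Mint_cmult, intro continuous_intros continuous_on_compose_flow fc)
        (simp add: Mint_diff[OF continuous_on_compose_flow[OF fc] fc])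
    also have "\<dots> = 0" by (simp add: Mint_flow_invariant[OF fc])
    finally have "Mint (\<lambda>p. (1 / complex_of_real t) * (f (flow i t p) - f p)) = 0" .
    then have "Mint (\<lambda>p. (1 / complex_of_real t) * (f (flow i t p) - f p) - Xd i f p) = - Mint (Xd i f)"
      by (subst Mint_diff[OF quot Dc]) simp
    moreover have "norm (Mint (\<lambda>p. (1 / complex_of_real t) * (f (flow i t p) - f p) - Xd i f p))
        \<le> e * shell_vol"
      by (intro Mint_norm_bound approx continuous_intros quot Dc)
    ultimately show ?thesis by simp
  qed
  show ?thesis
  proof (rule ccontr)
    assume "Mint (Xd i f) \<noteq> 0"
    then have "norm (Mint (Xd i f)) \<le> (norm (Mint (Xd i f)) / (2 * shell_vol)) * shell_vol"
      using shell_vol_pos by (intro bound) simp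
    then show False using \<open>Mint (Xd i f) \<noteq> 0\<close> shell_vol_pos by (simp add: field_simps)
  qed
qed

lemma Zd_eq_Xd_combination:
  "k < 6 \<Longrightarrow>
    \<exists>a b c1 c2. a < 6 \<and> b < 6 \<and> (\<forall>f. Zd k f = (\<lambda>x. c1 * Xd a f x + c2 * Xd b f x))"
proof -
  assume "k < 6"
  then have "k = 0 \<or> k = 1 \<or> k = 2 \<or> k = 3 \<or> k = 4 \<or> k = 5" by auto
  then show ?thesis
  proof (elim disjE)
    assume "k = 0" then show ?thesis
      by (intro exI[of _ 0] exI[of _ 1] exI[of _ "1/2"] exI[of _ "-\<i>/2"])
        (auto simp: Zd_def fun_eq_iff field_simps)
  next
    assume "k = 1" then show ?thesis
      by (intro exI[of _ 3] exI[of _ 4] exI[of _ "1/2"] exI[of _ "-\<i>/2"])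
        (auto simp: Zd_def fun_eq_iff field_simps)
  next
    assume "k = 2" then show ?thesis
      by (intro exI[of _ 2] exI[of _ 5] exI[of _ "1/2"] exI[of _ "-\<i>/2"])
        (auto simp: Zd_def fun_eq_iff field_simps)
  next
    assume "k = 3" then show ?thesis
      by (intro exI[of _ 0] exI[of _ 1] exI[of _ "1/2"] exI[of _ "\<i>/2"])
        (auto simp: Zd_def fun_eq_iff field_simps)
  next
    assume "k = 4" then show ?thesis
      by (intro exI[of _ 3] exI[of _ 4] exI[of _ "1/2"] exI[of _ "\<i>/2"])
        (auto simp: Zd_def fun_eq_iff field_simps)
  next
    assume "k = 5" then show ?thesis
      by (intro exI[of _ 2] exI[of _ 5] exI[of _ "1/2"] exI[of _ "\<i>/2"])
        (auto simp: Zd_def fun_eq_iff field_simps)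
  qed
qed

lemma
  assumes f: "smooth_fun f" and k: "k < 6"
  shows continuous_on_Zd: "continuous_on Mspace (Zd k f)"
    and Mint_Zd_eq_0: "Mint (Zd k f) = 0"
proof -
  obtain a b c1 c2 where ab: "a < 6" "b < 6"
    and Z: "\<And>f. Zd k f = (\<lambda>x. c1 * Xd a f x + c2 * Xd b f x)"
    using Zd_eq_Xd_combination[OF k] by blast
  have ca: "continuous_on Mspace (Xd a f)" and cb: "continuous_on Mspace (Xd b f)"
    using smooth_fun_Xd_continuous[OF f] by auto
  show "continuous_on Mspace (Zd k f)" unfolding Z by (intro continuous_intros ca cb)
  show "Mint (Zd k f) = 0"
    unfolding Z using Mint_add Mint_cmult ca cb Mint_Xd_eq_0[OF f ab(1)] Mint_Xd_eq_0[OF f ab(2)]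
    by (simp add: continuous_intros)
qed

lemma Mint_del_delbar_U23_eq_0:
  assumes \<alpha>: "smooth_form \<alpha>" "is_type 1 2 \<alpha>" and \<beta>: "smooth_form \<beta>" "is_type 2 1 \<beta>"
  shows "Mint (\<lambda>x. del \<alpha> U23 x + delbar \<beta> U23 x) = 0"
proof -
  have sf: "smooth_fun (\<alpha> U)" "smooth_fun (\<beta> U)" for U
    using \<alpha> \<beta> by (simp_all add: smooth_form_def)
  have k6: "k < 6" if "k \<in> U23" for k using that by (auto simp: U23_def)
  have cont: "continuous_on Mspace (\<lambda>x. Zd k (\<alpha> (U23 - {k})) x + Zd k (\<beta> (U23 - {k})) x)"
    if "k \<in> U23" for k
    by (intro continuous_intros continuous_on_Zd sf k6 that)
  have "Mint (\<lambda>x. del \<alpha> U23 x + delbar \<beta> U23 x) = (\<Sum>k\<in>U23.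
      Mint (\<lambda>x. wsign {k} (U23 - {k}) * (Zd k (\<alpha> (U23 - {k})) x + Zd k (\<beta> (U23 - {k})) x)))"
    unfolding del_delbar_U23[OF \<alpha>(2) \<beta>(2)]
    by (intro Mint_sum continuous_intros cont) (simp_all add: U23_def)
  also have "\<dots> = 0"
  proof (intro sum.neutral ballI)
    fix k assume k: "k \<in> U23"
    show "Mint (\<lambda>x. wsign {k} (U23 - {k}) * (Zd k (\<alpha> (U23 - {k})) x + Zd k (\<beta> (U23 - {k})) x)) = 0"
      using Mint_cmult[OF cont[OF k]]
        Mint_add[OF continuous_on_Zd[OF sf(1) k6[OF k]] continuous_on_Zd[OF sf(2) k6[OF k]]]
        Mint_Zd_eq_0[OF sf(1) k6[OF k]] Mint_Zd_eq_0[OF sf(2) k6[OF k]]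
      by simp
  qed
  finally show ?thesis .
qed

lemma continuous_on_omega2_U23:
  assumes "hermitian_metric h"
  shows "continuous_on Mspace (\<lambda>x. wedge (fundform h) (fundform h) U23 x)"
proof -
  have "continuous_on Mspace (h j k)" if "j < 3" "k < 3" for j k
    using assms that smooth_fun_continuous unfolding hermitian_metric_def by blast
  then show ?thesis unfolding omega2_U23 by (intro continuous_intros) simp_all
qed

theorem mainTheorem9:
  fixes h :: "nat \<Rightarrow> nat \<Rightarrow> pt \<Rightarrow> complex"
  assumes "gauduchon h"
  shows "\<not> aeppli_zero 2 2 (wedge (fundform h) (fundform h))"
proof
  assume "aeppli_zero 2 2 (wedge (fundform h) (fundform h))"
  then obtain \<alpha> \<beta> where \<alpha>: "smooth_form \<alpha>" "is_type 1 2 \<alpha>" and \<beta>: "smooth_form \<beta>" "is_type 2 1 \<beta>"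
    and eq: "\<And>U x. x \<in> Mspace \<Longrightarrow> wedge (fundform h) (fundform h) U x = del \<alpha> U x + delbar \<beta> U x"
    unfolding aeppli_zero_def by auto
  have hm: "hermitian_metric h" using assms by (simp add: gauduchon_def)
  have "Mint (\<lambda>x. wedge (fundform h) (fundform h) U23 x) = Mint (\<lambda>x. del \<alpha> U23 x + delbar \<beta> U23 x)"
    using eq by (rule Mint_cong)
  also have "\<dots> = 0" by (rule Mint_del_delbar_U23_eq_0[OF \<alpha> \<beta>])
  finally have "Mint (\<lambda>x. wedge (fundform h) (fundform h) U23 x) = 0" .
  moreover have "0 < Re (Mint (\<lambda>x. wedge (fundform h) (fundform h) U23 x))"
  proof (rule Mint_pos[OF continuous_on_omega2_U23[OF hm]])
    fix p assume "p \<in> Mspace"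
    have "Re (wedge (fundform h) (fundform h) U23 p)
        = 2 * Re (h 1 1 p * h 2 2 p - h 1 2 p * h 2 1 p)"
      by (simp add: omega2_U23)
    then show "0 < Re (wedge (fundform h) (fundform h) U23 p)"
      using hermitian_minor23_pos[OF hm \<open>p \<in> Mspace\<close>] by linarith
  qed
  ultimately show False by simp
qed

end
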